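(* For every natural number $n>2$, the star $K_{1,n}$ is not $\mathcal{D}_t$-unique. In particular, the $\mathcal{D}_t$-equivalence class $[K_{1,n}]$ contains $K_{1,n}$, the lollipop graph $L(n,1)$, and every graph $L(n,1)-e$ where $e$ is an edge of the complete graph $K_n$ inside $L(n,1)$ that shares no endpoint with the pendant edge of $L(n,1)$.
   Context: $K_{1,n}$ is the star with one center and $n$ leaves. The lollipop graph $L(n,1)$ is the complete graph $K_n$ with one extra vertex joined by a single (pendant) edge to one vertex of $K_n$. For a finite simple graph $G=(V,E)$, a set $D\subseteq V$ is a total dominating set if every vertex of $V$ is adjacent to some vertex of $D$; $d_t(G,i)$ is the number of total dominating sets of size $i$, and $D_t(G,x)=\sum_{i} d_t(G,i)x^i$ is the total domination polynomial. Two graphs $G,H$ are $\mathcal{D}_t$-equivalent if $D_t(G,x)=D_t(H,x)$ (graphs being compared among graphs of the same order); $[G]$ is the class of graphs $\mathcal{D}_t$-equivalent to $G$, and $G$ is $\mathcal{D}_t$-unique if every graph $\mathcal{D}_t$-equivalent to $G$ is isomorphic to $G$. *)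

theory Defs
  imports Main "HOL-Computational_Algebra.Polynomial"
begin

type_synonym 'a graph = "'a set \<times> 'a set set"

definition verts :: "'a graph \<Rightarrow> 'a set" where "verts G = fst G"
definition edges :: "'a graph \<Rightarrow> 'a set set" where "edges G = snd G"

definition simple_graph :: "'a graph \<Rightarrow> bool" where
  "simple_graph G \<longleftrightarrow> finite (verts G) \<and> (\<forall>e\<in>edges G. e \<subseteq> verts G \<and> card e = 2)"

definition adj :: "'a graph \<Rightarrow> 'a \<Rightarrow> 'a \<Rightarrow> bool" where
  "adj G u v \<longleftrightarrow> {u, v} \<in> edges G"

definition total_dominating :: "'a graph \<Rightarrow> 'a set \<Rightarrow> bool" where
  "total_dominating G D \<longleftrightarrow> D \<subseteq> verts G \<and> (\<forall>v\<in>verts G. \<exists>u\<in>D. adj G v u)"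

definition dt :: "'a graph \<Rightarrow> nat \<Rightarrow> nat" where
  "dt G i = card {D. total_dominating G D \<and> card D = i}"

text \<open>Total domination polynomial (total dominating sets are subsets of V, so i ranges up to |V|).\<close>
definition total_dom_poly :: "'a graph \<Rightarrow> int poly" where
  "total_dom_poly G = (\<Sum>i\<le>card (verts G). monom (int (dt G i)) i)"

definition dt_equiv :: "'a graph \<Rightarrow> 'a graph \<Rightarrow> bool" where
  "dt_equiv G H \<longleftrightarrow> card (verts G) = card (verts H) \<and> total_dom_poly G = total_dom_poly H"

definition dt_class :: "'a graph \<Rightarrow> 'a graph set" where
  "dt_class G = {H. simple_graph H \<and> dt_equiv G H}"

definition graph_iso :: "'a graph \<Rightarrow> 'b graph \<Rightarrow> bool" where
  "graph_iso G H \<longleftrightarrow> (\<exists>f. bij_betw f (verts G) (verts H) \<and>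
      (\<forall>u\<in>verts G. \<forall>v\<in>verts G. {u, v} \<in> edges G \<longleftrightarrow> {f u, f v} \<in> edges H))"

definition dt_unique :: "'a graph \<Rightarrow> bool" where
  "dt_unique G \<longleftrightarrow> (\<forall>H\<in>dt_class G. graph_iso G H)"

definition star :: "nat \<Rightarrow> nat graph" where
  "star n = ({0..n}, {{0, i} | i. i \<in> {1..n}})"

definition complete_edges :: "'a set \<Rightarrow> 'a set set" where
  "complete_edges S = {{u, v} | u v. u \<in> S \<and> v \<in> S \<and> u \<noteq> v}"

definition lollipop :: "nat \<Rightarrow> nat graph" where
  "lollipop n = ({0..n}, complete_edges {0..<n} \<union> {{0, n}})"

definition delete_edge :: "'a graph \<Rightarrow> 'a set \<Rightarrow> 'a graph" where
  "delete_edge G e = (verts G, edges G - {e})"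

end

theory Submission
  imports Defs
begin

text \<open>If a vertex c is adjacent to all other vertices and some vertex l has c as its only
  neighbour, then a set is totally dominating exactly when it contains c (to dominate l) and
  some other vertex (to dominate c). Every graph on {0..n} with universal vertex 0 and pendant
  vertex n therefore has the total domination polynomial of the star. The star and the lollipop
  are told apart by a triangle, which the lollipop contains for n > 2.\<close>

definition has_triangle :: "'a graph \<Rightarrow> bool" where
  "has_triangle G \<longleftrightarrow> (\<exists>x\<in>verts G. \<exists>y\<in>verts G. \<exists>z\<in>verts G.
     distinct [x, y, z] \<and> adj G x y \<and> adj G y z \<and> adj G x z)"

lemma adj_sym: "adj G u v \<longleftrightarrow> adj G v u"
  by (simp add: adj_def insert_commute)

lemma adj_irrefl: "simple_graph G \<Longrightarrow> adj G u v \<Longrightarrow> u \<noteq> v"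
  by (auto simp: simple_graph_def adj_def)

lemma total_dominating_iff_universal_and_pendant:
  assumes "simple_graph G" and l: "l \<in> verts G"
    and universal: "\<forall>v\<in>verts G - {c}. adj G c v"
    and pendant: "\<forall>u. adj G l u \<longrightarrow> u = c"
  shows "total_dominating G D \<longleftrightarrow> D \<subseteq> verts G \<and> c \<in> D \<and> (\<exists>u\<in>D. u \<noteq> c)"
proof
  assume "total_dominating G D"
  then have sub: "D \<subseteq> verts G" and dom: "\<forall>v\<in>verts G. \<exists>u\<in>D. adj G v u"
    by (auto simp: total_dominating_def)
  from dom l pendant have c: "c \<in> D" by blast
  with sub dom obtain w where "w \<in> D" "adj G c w" by blast
  with \<open>simple_graph G\<close> have "\<exists>u\<in>D. u \<noteq> c" using adj_irrefl by fastforce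
  with sub c show "D \<subseteq> verts G \<and> c \<in> D \<and> (\<exists>u\<in>D. u \<noteq> c)" by blast
next
  assume D: "D \<subseteq> verts G \<and> c \<in> D \<and> (\<exists>u\<in>D. u \<noteq> c)"
  have "\<exists>u\<in>D. adj G v u" if "v \<in> verts G" for v
  proof (cases "v = c")
    case True
    with D universal show ?thesis by blast
  next
    case False
    with universal that have "adj G c v" by blast
    then have "adj G v c" by (subst adj_sym)
    with D show ?thesis by blast
  qed
  with D show "total_dominating G D" by (simp add: total_dominating_def)
qed

lemma dt_equiv_if_same_total_dominating:
  assumes "verts G = verts H" and "\<And>D. total_dominating G D \<longleftrightarrow> total_dominating H D"
  shows "dt_equiv G H"
  using assms by (simp add: dt_equiv_def total_dom_poly_def dt_def)

lemma simple_graph_star: "simple_graph (star n)"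
  by (auto simp: simple_graph_def star_def verts_def edges_def)

lemma simple_graph_lollipop: "n > 0 \<Longrightarrow> simple_graph (lollipop n)"
  by (auto simp: simple_graph_def lollipop_def verts_def edges_def complete_edges_def)

lemma simple_graph_delete_edge: "simple_graph G \<Longrightarrow> simple_graph (delete_edge G e)"
  by (auto simp: simple_graph_def delete_edge_def verts_def edges_def)

lemma adj_star: "adj (star n) u v \<longleftrightarrow> (u = 0 \<and> v \<in> {1..n}) \<or> (v = 0 \<and> u \<in> {1..n})"
  by (auto simp: adj_def star_def edges_def doubleton_eq_iff)

lemma adj_lollipop:
  "adj (lollipop n) u v \<longleftrightarrow> (u \<noteq> v \<and> u < n \<and> v < n) \<or> {u, v} = {0, n}"
  by (auto simp: adj_def lollipop_def edges_def complete_edges_def doubleton_eq_iff)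

lemma verts_lollipop: "verts (lollipop n) = {0..n}"
  by (simp add: verts_def lollipop_def)

lemma verts_delete_edge: "verts (delete_edge G e) = verts G"
  by (simp add: delete_edge_def verts_def)

lemma adj_delete_edge: "adj (delete_edge G e) u v \<longleftrightarrow> adj G u v \<and> {u, v} \<noteq> e"
  by (simp add: adj_def delete_edge_def edges_def)

lemma total_dominating_iff_centre_0_pendant_n:
  fixes G :: "nat graph"
  assumes "simple_graph G" and V: "verts G = {0..n}"
    and universal: "\<forall>v\<in>{1..n}. adj G 0 v"
    and "\<forall>u. adj G n u \<longrightarrow> u = 0"
  shows "total_dominating G D \<longleftrightarrow> D \<subseteq> {0..n} \<and> 0 \<in> D \<and> (\<exists>u\<in>D. u \<noteq> 0)"
proof -
  have "{0..n} - {0} = {1..n}" by auto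
  with universal have "\<forall>v\<in>verts G - {0}. adj G 0 v" by (simp add: V)
  with assms show ?thesis
    using total_dominating_iff_universal_and_pendant[of G n 0 D] by auto
qed

lemma in_dt_class_star_if_universal_and_pendant:
  fixes G :: "nat graph"
  assumes "simple_graph G" and V: "verts G = {0..n}"
    and "\<forall>v\<in>{1..n}. adj G 0 v"
    and "\<forall>u. adj G n u \<longrightarrow> u = 0"
  shows "G \<in> dt_class (star n)"
proof -
  have Vs: "verts (star n) = {0..n}" by (simp add: verts_def star_def)
  have "\<forall>v\<in>{1..n}. adj (star n) 0 v" and "\<forall>u. adj (star n) n u \<longrightarrow> u = 0"
    by (auto simp: adj_star)
  then have "total_dominating G D \<longleftrightarrow> total_dominating (star n) D" for D
    using total_dominating_iff_centre_0_pendant_n[OF assms]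
      total_dominating_iff_centre_0_pendant_n[OF simple_graph_star Vs] by simp
  then have "dt_equiv (star n) G"
    using V Vs by (intro dt_equiv_if_same_total_dominating) auto
  with \<open>simple_graph G\<close> show ?thesis by (simp add: dt_class_def)
qed

lemma has_triangle_if_graph_iso:
  assumes "graph_iso G H" and "has_triangle H"
  shows "has_triangle G"
proof -
  obtain f where bij: "bij_betw f (verts G) (verts H)"
    and iso: "\<forall>u\<in>verts G. \<forall>v\<in>verts G. adj G u v \<longleftrightarrow> adj H (f u) (f v)"
    using assms(1) by (auto simp: graph_iso_def adj_def)
  define g where "g = inv_into (verts G) f"
  have g: "g x \<in> verts G" "f (g x) = x" if "x \<in> verts H" for x
    using bij that unfolding g_def
    by (metis bij_betw_imp_surj_on inv_into_into, metis bij_betw_inv_into_right)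
  obtain x y z where xyz: "x \<in> verts H" "y \<in> verts H" "z \<in> verts H"
    and "distinct [x, y, z]" "adj H x y" "adj H y z" "adj H x z"
    using assms(2) by (auto simp: has_triangle_def)
  have g_inj: "a = b" if "a \<in> verts H" "b \<in> verts H" "g a = g b" for a b
    using g(2) that by metis
  have g_adj: "adj G (g a) (g b)" if "a \<in> verts H" "b \<in> verts H" "adj H a b" for a b
    using iso g that by simp
  have "distinct [g x, g y, g z]"
    using \<open>distinct [x, y, z]\<close> g_inj xyz by auto
  moreover have "g x \<in> verts G" "g y \<in> verts G" "g z \<in> verts G"
    using g(1) xyz by auto
  moreover have "adj G (g x) (g y)" "adj G (g y) (g z)" "adj G (g x) (g z)"
    using g_adj xyz \<open>adj H x y\<close> \<open>adj H y z\<close> \<open>adj H x z\<close> by auto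
  ultimately show ?thesis
    unfolding has_triangle_def by blast
qed

lemma not_has_triangle_star: "\<not> has_triangle (star n)"
  by (auto simp: has_triangle_def adj_star)

lemma has_triangle_lollipop: "n > 2 \<Longrightarrow> has_triangle (lollipop n)"
  unfolding has_triangle_def adj_lollipop
  by (rule bexI[of _ 0], rule bexI[of _ 1], rule bexI[of _ 2]) (auto simp: verts_lollipop)

lemma lollipop_universal_0: "\<forall>v\<in>{1..n}. adj (lollipop n) 0 v"
  by (auto simp: adj_lollipop)

lemma lollipop_pendant_n: "\<forall>u. adj (lollipop n) n u \<longrightarrow> u = 0"
  by (auto simp: adj_lollipop doubleton_eq_iff)

lemma lollipop_in_dt_class_star: "n > 0 \<Longrightarrow> lollipop n \<in> dt_class (star n)"
  by (intro in_dt_class_star_if_universal_and_pendant simple_graph_lollipop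
      verts_lollipop lollipop_universal_0 lollipop_pendant_n)

lemma delete_edge_lollipop_in_dt_class_star:
  assumes "n > 0" and "e \<inter> {0, n} = {}"
  shows "delete_edge (lollipop n) e \<in> dt_class (star n)"
proof (rule in_dt_class_star_if_universal_and_pendant)
  show "simple_graph (delete_edge (lollipop n) e)"
    using assms(1) by (intro simple_graph_delete_edge simple_graph_lollipop)
  show "verts (delete_edge (lollipop n) e) = {0..n}"
    by (simp add: verts_delete_edge verts_lollipop)
  show "\<forall>v\<in>{1..n}. adj (delete_edge (lollipop n) e) 0 v"
    using lollipop_universal_0 assms(2) by (auto simp: adj_delete_edge)
  show "\<forall>u. adj (delete_edge (lollipop n) e) n u \<longrightarrow> u = 0"
    using lollipop_pendant_n[of n] by (simp add: adj_delete_edge)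
qed

theorem mainTheorem6:
  fixes n :: nat
  assumes "n > 2"
  shows "\<not> dt_unique (star n) \<and>
         star n \<in> dt_class (star n) \<and>
         lollipop n \<in> dt_class (star n) \<and>
         (\<forall>e \<in> complete_edges {0..<n}. e \<inter> {0, n} = {} \<longrightarrow>
             delete_edge (lollipop n) e \<in> dt_class (star n))"
proof -
  have lollipop: "lollipop n \<in> dt_class (star n)"
    using assms by (simp add: lollipop_in_dt_class_star)
  have star: "star n \<in> dt_class (star n)"
    by (simp add: dt_class_def dt_equiv_def simple_graph_star)
  have "\<not> graph_iso (star n) (lollipop n)"
    using has_triangle_if_graph_iso has_triangle_lollipop[OF assms] not_has_triangle_star by blast
  with lollipop have "\<not> dt_unique (star n)" by (auto simp: dt_unique_def)
  with star lollipop show ?thesis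
    using assms delete_edge_lollipop_in_dt_class_star by simp
qed

end
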